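(* Let $K$ be a field, $Q$ the bipartite type $A$ quiver with vertices $y_0,x_1,\dots,x_n,y_n$ and arrows $\alpha_i\colon x_i\to y_{i-1}$, $\beta_i\colon x_i\to y_i$, and $\mathbf{d}$ a dimension vector. A matrix $Z\in Y^{\mathbf{w}}_\circ$ lies in the image of $\zeta$ if and only if both (NW) $\operatorname{rank}Z_{y_i\times x_j}=0$ for all $0\le i\le n-2$ and $i+2\le j\le n$, and (SE) $\operatorname{rank}Z_{x_i\times y_j}=\sum_{k=i}^n\mathbf{d}(x_k)+\sum_{k=0}^j\mathbf{d}(y_k)$ for all $2\le i\le n$ and $i-1\le j\le n-1$.
   Context: $d_x=\sum\mathbf{d}(x_i)$, $d_y=\sum\mathbf{d}(y_i)$, $d=d_x+d_y$. $Y^{\mathbf{w}}_\circ$ is the set of $d\times d$ matrices $\begin{pmatrix}*&\mathbf{1}_{d_y}\\ \mathbf{1}_{d_x}&0\end{pmatrix}$ with $*$ an arbitrary $d_y\times d_x$ block. Block rows of such a matrix are labeled, top to bottom, $y_0,\dots,y_n,x_n,\dots,x_1$ (of sizes $\mathbf{d}$ of the label) and block columns, left to right, $x_n,\dots,x_1,y_0,\dots,y_n$. For vertices $v,v'$, $Z_{v\times v'}$ is the northwest-justified submatrix of $Z$ whose southeast corner is the block in block row $v$ and block column $v'$. For $V\in\mathrm{rep}_Q(\mathbf{d})$ (tuples $V_a\in\mathrm{Mat}_{\mathbf{d}(ha)\times\mathbf{d}(ta)}(K)$), $M_Q(V)$ is the block matrix with block rows $y_0,\dots,y_n$ and block columns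 $x_n,\dots,x_1$, $V_{\alpha_i}$ in block $(y_{i-1},x_i)$, $V_{\beta_i}$ in block $(y_i,x_i)$, zeros elsewhere, and $\zeta(V)=\begin{pmatrix}M_Q(V)&\mathbf{1}_{d_y}\\ \mathbf{1}_{d_x}&0\end{pmatrix}$. *)

theory Defs
  imports "Jordan_Normal_Form.DL_Rank"
begin

text \<open>Dimension vector: dx i = d(x_i) for 1 \<le> i \<le> n, dy i = d(y_i) for 0 \<le> i \<le> n.\<close>

definition mat_rank :: "'a::field mat \<Rightarrow> nat" where
  "mat_rank A = vec_space.rank (dim_row A) A"

definition d_x :: "nat \<Rightarrow> (nat \<Rightarrow> nat) \<Rightarrow> nat" where
  "d_x n dx = (\<Sum>k=1..n. dx k)"

definition d_y :: "nat \<Rightarrow> (nat \<Rightarrow> nat) \<Rightarrow> nat" where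
  "d_y n dy = (\<Sum>k=0..n. dy k)"

text \<open>Row offsets (start) of block row y_a (rows y_0,...,y_n,x_n,...,x_1).\<close>
definition yrow_off :: "(nat \<Rightarrow> nat) \<Rightarrow> nat \<Rightarrow> nat" where
  "yrow_off dy a = (\<Sum>k<a. dy k)"

text \<open>Column offsets (start) of block column x_b (columns x_n,...,x_1,y_0,...,y_n).\<close>
definition xcol_off :: "nat \<Rightarrow> (nat \<Rightarrow> nat) \<Rightarrow> nat \<Rightarrow> nat" where
  "xcol_off n dx b = (\<Sum>k\<in>{b<..n}. dx k)"

text \<open>End (exclusive) of block rows / columns: sizes of the northwest submatrices.\<close>
definition row_end_y :: "(nat \<Rightarrow> nat) \<Rightarrow> nat \<Rightarrow> nat" where
  "row_end_y dy i = (\<Sum>k=0..i. dy k)"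

definition row_end_x :: "nat \<Rightarrow> (nat \<Rightarrow> nat) \<Rightarrow> (nat \<Rightarrow> nat) \<Rightarrow> nat \<Rightarrow> nat" where
  "row_end_x n dx dy i = d_y n dy + (\<Sum>k=i..n. dx k)"

definition col_end_x :: "nat \<Rightarrow> (nat \<Rightarrow> nat) \<Rightarrow> nat \<Rightarrow> nat" where
  "col_end_x n dx j = (\<Sum>k=j..n. dx k)"

definition col_end_y :: "nat \<Rightarrow> (nat \<Rightarrow> nat) \<Rightarrow> (nat \<Rightarrow> nat) \<Rightarrow> nat \<Rightarrow> nat" where
  "col_end_y n dx dy j = d_x n dx + (\<Sum>k=0..j. dy k)"

definition nw_sub :: "'a mat \<Rightarrow> nat \<Rightarrow> nat \<Rightarrow> 'a mat" where
  "nw_sub Z r c = mat r c (\<lambda>(i,j). Z $$ (i,j))"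

definition Z_yx :: "nat \<Rightarrow> (nat \<Rightarrow> nat) \<Rightarrow> (nat \<Rightarrow> nat) \<Rightarrow> 'a mat \<Rightarrow> nat \<Rightarrow> nat \<Rightarrow> 'a mat" where
  "Z_yx n dx dy Z i j = nw_sub Z (row_end_y dy i) (col_end_x n dx j)"

definition Z_xy :: "nat \<Rightarrow> (nat \<Rightarrow> nat) \<Rightarrow> (nat \<Rightarrow> nat) \<Rightarrow> 'a mat \<Rightarrow> nat \<Rightarrow> nat \<Rightarrow> 'a mat" where
  "Z_xy n dx dy Z i j = nw_sub Z (row_end_x n dx dy i) (col_end_y n dx dy j)"

definition zeta_block :: "nat \<Rightarrow> (nat \<Rightarrow> nat) \<Rightarrow> (nat \<Rightarrow> nat) \<Rightarrow> 'a::field mat \<Rightarrow> 'a mat" where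
  "zeta_block n dx dy S = four_block_mat S (1\<^sub>m (d_y n dy)) (1\<^sub>m (d_x n dx)) (0\<^sub>m (d_x n dx) (d_y n dy))"

definition Y_circ :: "nat \<Rightarrow> (nat \<Rightarrow> nat) \<Rightarrow> (nat \<Rightarrow> nat) \<Rightarrow> 'a::field mat set" where
  "Y_circ n dx dy = {zeta_block n dx dy S | S. S \<in> carrier_mat (d_y n dy) (d_x n dx)}"

definition rep_Q :: "nat \<Rightarrow> (nat \<Rightarrow> nat) \<Rightarrow> (nat \<Rightarrow> nat) \<Rightarrow> ((nat \<Rightarrow> 'a mat) \<times> (nat \<Rightarrow> 'a mat)) set" where
  "rep_Q n dx dy = {(al, be). \<forall>i\<in>{1..n}. al i \<in> carrier_mat (dy (i - 1)) (dx i) \<and> be i \<in> carrier_mat (dy i) (dx i)}"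

definition place :: "'a::zero mat \<Rightarrow> nat \<Rightarrow> nat \<Rightarrow> nat \<Rightarrow> nat \<Rightarrow> 'a" where
  "place A r0 c0 r c = (if r0 \<le> r \<and> r < r0 + dim_row A \<and> c0 \<le> c \<and> c < c0 + dim_col A
      then A $$ (r - r0, c - c0) else 0)"

definition M_Q :: "nat \<Rightarrow> (nat \<Rightarrow> nat) \<Rightarrow> (nat \<Rightarrow> nat) \<Rightarrow> (nat \<Rightarrow> 'a::field mat) \<times> (nat \<Rightarrow> 'a mat) \<Rightarrow> 'a mat" where
  "M_Q n dx dy V = mat (d_y n dy) (d_x n dx) (\<lambda>(r,c).
      (\<Sum>i\<in>{1..n}. place (fst V i) (yrow_off dy (i - 1)) (xcol_off n dx i) r c
                 + place (snd V i) (yrow_off dy i) (xcol_off n dx i) r c))"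

definition zeta :: "nat \<Rightarrow> (nat \<Rightarrow> nat) \<Rightarrow> (nat \<Rightarrow> nat) \<Rightarrow> (nat \<Rightarrow> 'a::field mat) \<times> (nat \<Rightarrow> 'a mat) \<Rightarrow> 'a mat" where
  "zeta n dx dy V = zeta_block n dx dy (M_Q n dx dy V)"

end

(* Write Z = [[S, 1], [1, 0]].  Z is in the image of zeta exactly when S vanishes outside the
   blocks (y_(b-1), x_b) and (y_b, x_b) carrying the arrows alpha_b and beta_b.  Every block off
   these two diagonals lies either in a northwest corner Z_(y_i x x_j) with j >= i + 2, which has
   rank 0 iff it vanishes, or in the S-part of a southeast corner Z_(x_i x y_j) with j >= i - 1.
   The identity blocks of that corner already give it rank at least
   sum_(k >= i) d(x_k) + sum_(k <= j) d(y_k), and a nonzero entry of S beyond them adds one more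
   pivot; conversely, if S vanishes there, the corner is a sum of that many rank-one matrices. *)

theory Submission
  imports Defs
begin

lemma inj_on_of_triangular_pivots:
  fixes v :: "'b \<Rightarrow> 'a::zero vec" and f :: "'b \<Rightarrow> 'c::linorder"
  assumes piv: "\<And>j. j \<in> J \<Longrightarrow> v j $ piv j \<noteq> 0"
    and tri: "\<And>j j'. j \<in> J \<Longrightarrow> j' \<in> J \<Longrightarrow> j' \<noteq> j \<Longrightarrow> v j' $ piv j \<noteq> 0 \<Longrightarrow> f j < f j'"
  shows "inj_on v J"
proof (rule inj_onI, rule ccontr)
  fix j j' assume "j \<in> J" "j' \<in> J" "v j = v j'" "j \<noteq> j'"
  then have "f j < f j'" "f j' < f j" using piv tri by metis+
  then show False by simp
qed

lemma (in vec_space) lin_indpt_of_triangular_pivots: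
  fixes v :: "'b \<Rightarrow> 'a vec" and f :: "'b \<Rightarrow> 'c::linorder"
  assumes fin: "finite J" and carrier: "v ` J \<subseteq> carrier_vec n"
    and piv: "\<And>j. j \<in> J \<Longrightarrow> piv j < n \<and> v j $ piv j \<noteq> 0"
    and tri: "\<And>j j'. j \<in> J \<Longrightarrow> j' \<in> J \<Longrightarrow> j' \<noteq> j \<Longrightarrow> v j' $ piv j \<noteq> 0 \<Longrightarrow> f j < f j'"
  shows "lin_indpt (v ` J)"
proof
  have inj: "inj_on v J" using inj_on_of_triangular_pivots piv tri by metis
  assume "lin_dep (v ` J)"
  then obtain a w where comb: "lincomb a (v ` J) = 0\<^sub>v n" and w: "w \<in> v ` J" "a w \<noteq> 0"
    using finite_lin_dep fin carrier by blast
  define B where "B = {j \<in> J. a (v j) \<noteq> 0}"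
  have B: "finite B" "B \<noteq> {}" using fin w unfolding B_def by auto
  then have "Max (f ` B) \<in> f ` B" by simp
  then obtain j0 where j0: "j0 \<in> B" "f j0 = Max (f ` B)" by auto
  have max: "f j \<le> f j0" if "j \<in> B" for j using j0 that B by simp
  have p: "piv j0 < n" "v j0 $ piv j0 \<noteq> 0" "a (v j0) \<noteq> 0" using piv j0 unfolding B_def by auto
  \<comment> \<open>Evaluate the relation at the pivot row of the surviving column with the largest f.\<close>
  have "0 = lincomb a (v ` J) $ piv j0" using comb p by simp
  also have "\<dots> = (\<Sum>x\<in>v ` J. a x * x $ piv j0)" by (rule lincomb_index[OF p(1) carrier])
  also have "\<dots> = (\<Sum>j\<in>J. a (v j) * v j $ piv j0)" by (rule sum.reindex[OF inj, unfolded comp_def])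
  also have "\<dots> = (\<Sum>j\<in>J. if j = j0 then a (v j0) * v j0 $ piv j0 else 0)"
  proof (rule sum.cong[OF refl])
    fix j assume "j \<in> J"
    have "a (v j) = 0 \<or> v j $ piv j0 = 0" if "j \<noteq> j0"
      using tri[of j0 j] max[of j] \<open>j \<in> J\<close> j0 that unfolding B_def by fastforce
    then show "a (v j) * v j $ piv j0 = (if j = j0 then a (v j0) * v j0 $ piv j0 else 0)" by auto
  qed
  also have "\<dots> = a (v j0) * v j0 $ piv j0" using j0 fin unfolding B_def by simp
  finally show False using p by simp
qed

lemma (in vec_space) card_le_rank_of_triangular_pivots:
  fixes f :: "nat \<Rightarrow> 'c::linorder"
  assumes A: "A \<in> carrier_mat n nc" and J: "J \<subseteq> {..<nc}"
    and piv: "\<And>j. j \<in> J \<Longrightarrow> piv j < n \<and> A $$ (piv j, j) \<noteq> 0"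
    and tri: "\<And>j j'. j \<in> J \<Longrightarrow> j' \<in> J \<Longrightarrow> j' \<noteq> j \<Longrightarrow> A $$ (piv j, j') \<noteq> 0 \<Longrightarrow> f j < f j'"
  shows "card J \<le> rank A"
proof -
  have col: "col A j $ r = A $$ (r, j)" if "j \<in> J" "r < n" for j r using that J A by auto
  have piv': "piv j < n \<and> col A j $ piv j \<noteq> 0" if "j \<in> J" for j using piv col that by simp
  have tri': "f j < f j'" if "j \<in> J" "j' \<in> J" "j' \<noteq> j" "col A j' $ piv j \<noteq> 0" for j j'
    using tri piv col that by metis
  have "inj_on (col A) J" by (rule inj_on_of_triangular_pivots[OF _ tri']) (use piv' in auto)
  moreover have "card (col A ` J) \<le> rank A"
  proof (rule rank_ge_card_indpt[OF A])
    show "col A ` J \<subseteq> set (cols A)" using J A by (auto simp: cols_def)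
    show "lin_indpt (col A ` J)"
      by (rule lin_indpt_of_triangular_pivots[OF _ _ piv' tri'])
        (use J A finite_subset in auto)
  qed
  ultimately show ?thesis by (simp add: card_image)
qed

lemma (in vec_space) rank_le_of_sum_of_products:
  assumes "A \<in> carrier_mat n nc"
    and "\<And>r c. r < n \<Longrightarrow> c < nc \<Longrightarrow> A $$ (r, c) = (\<Sum>k<m. f k r * g k c)"
  shows "rank A \<le> m"
  using assms
proof (induction m arbitrary: A)
  case 0
  then have "A = 0\<^sub>m n nc" by (intro eq_matI) auto
  then show ?case using rank_0I by simp
next
  case (Suc m)
  define B where "B = mat n nc (\<lambda>(r, c). \<Sum>k<m. f k r * g k c)"
  define C where "C = mat n nc (\<lambda>(r, c). f m r * g m c)"
  have BC: "B \<in> carrier_mat n nc" "C \<in> carrier_mat n nc" unfolding B_def C_def by auto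
  have "A = B + C" using Suc.prems unfolding B_def C_def by (intro eq_matI) auto
  moreover have "rank B \<le> m" using Suc.IH[OF BC(1)] unfolding B_def by auto
  moreover have "rank C \<le> 1" by (rule rank_le_1_product_entries[OF BC(2)]) (auto simp: C_def)
  ultimately show ?case using rank_subadditive[OF BC] by simp
qed

lemma mat_rank_eq_0_iff:
  fixes A :: "'a::field mat"
  shows "mat_rank A = 0 \<longleftrightarrow> (\<forall>r c. r < dim_row A \<longrightarrow> c < dim_col A \<longrightarrow> A $$ (r, c) = 0)"
proof
  assume "mat_rank A = 0"
  show "\<forall>r c. r < dim_row A \<longrightarrow> c < dim_col A \<longrightarrow> A $$ (r, c) = 0"
  proof (intro allI impI, rule ccontr)
    fix r c assume rc: "r < dim_row A" "c < dim_col A" "A $$ (r, c) \<noteq> 0"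
    have "card {c} \<le> vec_space.rank (dim_row A) A"
      by (rule vec_space.card_le_rank_of_triangular_pivots[where piv = "\<lambda>_. r" and f = "\<lambda>_. 0 :: nat"])
        (use rc in auto)
    then show False using \<open>mat_rank A = 0\<close> unfolding mat_rank_def by simp
  qed
next
  assume "\<forall>r c. r < dim_row A \<longrightarrow> c < dim_col A \<longrightarrow> A $$ (r, c) = 0"
  then have "A = 0\<^sub>m (dim_row A) (dim_col A)" by (intro eq_matI) auto
  then show "mat_rank A = 0" unfolding mat_rank_def by (metis vec_space.rank_0I)
qed

definition bordered :: "'a::field mat \<Rightarrow> 'a mat" where
  "bordered S = four_block_mat S (1\<^sub>m (dim_row S)) (1\<^sub>m (dim_col S)) (0\<^sub>m (dim_col S) (dim_row S))"

lemma index_bordered: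
  assumes "S \<in> carrier_mat m1 m2" "r < m1 + m2" "c < m2 + m1"
  shows "bordered S $$ (r, c) =
    (if r < m1 then if c < m2 then S $$ (r, c) else if r = c - m2 then 1 else 0
     else if c < m2 then if r - m1 = c then 1 else 0 else 0)"
  using assms unfolding bordered_def by auto

lemma nw_sub_bordered:
  assumes "S \<in> carrier_mat m1 m2" "r \<le> m1" "c \<le> m2"
  shows "nw_sub (bordered S) r c = nw_sub S r c"
  using assms index_bordered[OF assms(1)] unfolding nw_sub_def by (intro eq_matI) auto

lemma nw_sub_full: "nw_sub S (dim_row S) (dim_col S) = S"
  unfolding nw_sub_def by (intro eq_matI) auto

lemma index_nw_sub_bordered:
  assumes "S \<in> carrier_mat m1 m2" "p \<le> m2" "q \<le> m1" "r < m1 + p" "c < m2 + q"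
  shows "nw_sub (bordered S) (m1 + p) (m2 + q) $$ (r, c) =
    (if r < m1 then if c < m2 then S $$ (r, c) else if r = c - m2 then 1 else 0
     else if c < m2 then if r - m1 = c then 1 else 0 else 0)"
  using assms index_bordered[OF assms(1), of r c] unfolding nw_sub_def by auto

text \<open>C = {} accounts for the pivots in the two identity blocks; C = {c0} adds a pivot at
  a nonzero entry of S outside its first q rows and p columns.\<close>
lemma card_le_mat_rank_nw_sub_bordered:
  assumes S: "S \<in> carrier_mat m1 m2" and pq: "p \<le> m2" "q \<le> m1"
    and C: "C \<subseteq> {c0}" "c0 \<in> C \<Longrightarrow> q \<le> r0 \<and> r0 < m1 \<and> p \<le> c0 \<and> c0 < m2 \<and> S $$ (r0, c0) \<noteq> 0"
  shows "p + q + card C \<le> mat_rank (nw_sub (bordered S) (m1 + p) (m2 + q))"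
proof -
  define A where "A = nw_sub (bordered S) (m1 + p) (m2 + q)"
  have A: "A \<in> carrier_mat (m1 + p) (m2 + q)" unfolding A_def nw_sub_def by simp
  note e = index_nw_sub_bordered[OF S pq, folded A_def]
  define J where "J = {..<p} \<union> {m2..<m2 + q}"
  define piv where "piv j = (if j \<in> C then r0 else if j < m2 then m1 + j else j - m2)" for j
  define f :: "nat \<Rightarrow> nat" where "f j = (if j \<in> C then 1 else if j < m2 then 2 else 0)" for j
  have below: "j - m2 < m1" if "\<not> j < m2" "j < m2 + q" for j
    using that pq by simp
  have CJ: "j \<in> C \<union> J \<longleftrightarrow> j \<in> C \<or> j < p \<or> (m2 \<le> j \<and> j < m2 + q)" for j
    using C pq unfolding J_def by auto
  have "card (C \<union> J) \<le> vec_space.rank (m1 + p) A"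
  proof (rule vec_space.card_le_rank_of_triangular_pivots[OF A, of _ piv f])
    show "C \<union> J \<subseteq> {..<m2 + q}" using C pq unfolding J_def by auto
  next
    fix j assume "j \<in> C \<union> J"
    then show "piv j < m1 + p \<and> A $$ (piv j, j) \<noteq> 0"
      unfolding CJ using C pq by (auto simp: piv_def e below)
  next
    fix j j' assume j: "j \<in> C \<union> J" and j': "j' \<in> C \<union> J" "j' \<noteq> j" "A $$ (piv j, j') \<noteq> 0"
    consider (extra) "j \<in> C" | (left) "j \<notin> C" "j < p" | (right) "j \<notin> C" "m2 \<le> j" "j < m2 + q"
      using j unfolding CJ by blast
    then show "f j < f j'"
    proof cases
      case extra
      then have "j = c0" "j' \<notin> C" using j' C(1) by auto
      then show ?thesis using extra j' pq \<open>c0 \<in> C \<Longrightarrow> _\<close> unfolding CJ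
        by (auto simp: piv_def f_def e split: if_splits)
    next
      case left
      then show ?thesis using j' pq C unfolding CJ by (auto simp: piv_def e split: if_splits)
    next
      case right
      then show ?thesis using j' pq unfolding CJ by (auto simp: piv_def f_def e below split: if_splits)
    qed
  qed
  moreover have "card J = p + q" unfolding J_def using pq by (subst card_Un_disjoint) auto
  moreover have "C \<inter> J = {}" using C unfolding J_def by auto
  moreover have "finite C" "finite J" using C(1) finite_subset unfolding J_def by auto
  ultimately have "p + q + card C \<le> vec_space.rank (m1 + p) A" by (simp add: card_Un_disjoint)
  then show ?thesis using A unfolding mat_rank_def A_def[symmetric] by simp
qed

lemma mat_rank_nw_sub_bordered_le:
  assumes S: "S \<in> carrier_mat m1 m2" and pq: "p \<le> m2" "q \<le> m1"
    and corner: "\<And>r c. q \<le> r \<Longrightarrow> r < m1 \<Longrightarrow> p \<le> c \<Longrightarrow> c < m2 \<Longrightarrow> S $$ (r, c) = 0"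
  shows "mat_rank (nw_sub (bordered S) (m1 + p) (m2 + q)) \<le> p + q"
proof -
  define A where "A = nw_sub (bordered S) (m1 + p) (m2 + q)"
  have A: "A \<in> carrier_mat (m1 + p) (m2 + q)" unfolding A_def nw_sub_def by simp
  have zero: "A $$ (r, c) = 0" if "r < m1 + p" "c < m2 + q" "q \<le> r" "p \<le> c" for r c
    using that pq corner index_nw_sub_bordered[OF S pq, folded A_def] by auto
  \<comment> \<open>A is its first p columns plus its first q rows beyond column p.\<close>
  define B where "B = mat (m1 + p) (m2 + q) (\<lambda>(r, c). if c < p then A $$ (r, c) else 0)"
  define D where "D = mat (m1 + p) (m2 + q) (\<lambda>(r, c). if r < q \<and> p \<le> c then A $$ (r, c) else 0)"
  have BD: "B \<in> carrier_mat (m1 + p) (m2 + q)" "D \<in> carrier_mat (m1 + p) (m2 + q)"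
    unfolding B_def D_def by auto
  have "A = B + D" using A zero unfolding B_def D_def by (intro eq_matI) auto
  moreover have "vec_space.rank (m1 + p) B \<le> p"
  proof (rule vec_space.rank_le_of_sum_of_products[OF BD(1),
        where f = "\<lambda>k r. A $$ (r, k)" and g = "\<lambda>k c. if k = c then 1 else 0"])
    fix r c assume "r < m1 + p" "c < m2 + q"
    moreover have "(\<Sum>k<p. A $$ (r, k) * (if k = c then 1 else 0)) = (\<Sum>k<p. if k = c then A $$ (r, k) else 0)"
      by (rule sum.cong) auto
    ultimately show "B $$ (r, c) = (\<Sum>k<p. A $$ (r, k) * (if k = c then 1 else 0))"
      by (simp add: B_def)
  qed
  moreover have "vec_space.rank (m1 + p) D \<le> q"
  proof (rule vec_space.rank_le_of_sum_of_products[OF BD(2),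
        where f = "\<lambda>k r. if k = r then 1 else 0" and g = "\<lambda>k c. if p \<le> c then A $$ (k, c) else 0"])
    fix r c assume "r < m1 + p" "c < m2 + q"
    moreover have "(\<Sum>k<q. (if k = r then 1 else 0) * (if p \<le> c then A $$ (k, c) else 0)) =
        (\<Sum>k<q. if k = r then (if p \<le> c then A $$ (r, c) else 0) else 0)"
      by (rule sum.cong) auto
    ultimately show "D $$ (r, c) =
        (\<Sum>k<q. (if k = r then 1 else 0) * (if p \<le> c then A $$ (k, c) else 0))"
      by (simp add: D_def)
  qed
  ultimately show ?thesis
    using vec_space.rank_subadditive[OF BD] A unfolding A_def[symmetric] mat_rank_def by fastforce
qed

lemma mat_rank_nw_sub_bordered_eq_iff:
  assumes S: "S \<in> carrier_mat m1 m2" and pq: "p \<le> m2" "q \<le> m1"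
  shows "mat_rank (nw_sub (bordered S) (m1 + p) (m2 + q)) = p + q \<longleftrightarrow>
    (\<forall>r c. q \<le> r \<longrightarrow> r < m1 \<longrightarrow> p \<le> c \<longrightarrow> c < m2 \<longrightarrow> S $$ (r, c) = 0)"
proof
  assume rank: "mat_rank (nw_sub (bordered S) (m1 + p) (m2 + q)) = p + q"
  show "\<forall>r c. q \<le> r \<longrightarrow> r < m1 \<longrightarrow> p \<le> c \<longrightarrow> c < m2 \<longrightarrow> S $$ (r, c) = 0"
  proof (intro allI impI, rule ccontr)
    fix r c assume "q \<le> r" "r < m1" "p \<le> c" "c < m2" "S $$ (r, c) \<noteq> 0"
    then have "p + q + card {c} \<le> p + q"
      using card_le_mat_rank_nw_sub_bordered[OF S pq, of "{c}" c r] rank by simp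
    then show False by simp
  qed
next
  assume "\<forall>r c. q \<le> r \<longrightarrow> r < m1 \<longrightarrow> p \<le> c \<longrightarrow> c < m2 \<longrightarrow> S $$ (r, c) = 0"
  then show "mat_rank (nw_sub (bordered S) (m1 + p) (m2 + q)) = p + q"
    using mat_rank_nw_sub_bordered_le[OF S pq] card_le_mat_rank_nw_sub_bordered[OF S pq, of "{}"]
    by (simp add: le_antisym)
qed

lemma yrow_off_Suc: "yrow_off dy (Suc a) = yrow_off dy a + dy a"
  unfolding yrow_off_def by simp

lemma yrow_off_mono: "a \<le> b \<Longrightarrow> yrow_off dy a \<le> yrow_off dy b"
  unfolding yrow_off_def by (rule sum_mono2) auto

lemma sum_atLeast0AtMost_eq_yrow_off: "(\<Sum>k=0..j. dy k) = yrow_off dy (Suc j)"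
  unfolding yrow_off_def by (simp add: atLeast0AtMost lessThan_Suc_atMost)

lemma d_y_eq_yrow_off: "d_y n dy = yrow_off dy (Suc n)"
  unfolding d_y_def by (rule sum_atLeast0AtMost_eq_yrow_off)

lemma xcol_off_antimono: "a \<le> b \<Longrightarrow> xcol_off n dx b \<le> xcol_off n dx a"
  unfolding xcol_off_def by (rule sum_mono2) auto

lemma xcol_off_pred: "1 \<le> b \<Longrightarrow> b \<le> n \<Longrightarrow> xcol_off n dx (b - 1) = xcol_off n dx b + dx b"
proof -
  assume "1 \<le> b" "b \<le> n"
  then have "{b - 1<..n} = insert b {b<..n}" by auto
  then show ?thesis unfolding xcol_off_def by simp
qed

lemma sum_atLeastAtMost_eq_xcol_off: "1 \<le> i \<Longrightarrow> (\<Sum>k=i..n. dx k) = xcol_off n dx (i - 1)"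
  unfolding xcol_off_def by (rule sum.cong) auto

lemma d_x_eq_xcol_off: "d_x n dx = xcol_off n dx 0"
  unfolding d_x_def using sum_atLeastAtMost_eq_xcol_off[where i = 1] by simp

lemma xcol_off_le_d_x: "xcol_off n dx b \<le> d_x n dx"
  unfolding d_x_eq_xcol_off by (rule xcol_off_antimono) simp

definition in_row_block :: "(nat \<Rightarrow> nat) \<Rightarrow> nat \<Rightarrow> nat \<Rightarrow> bool" where
  "in_row_block dy a r \<longleftrightarrow> yrow_off dy a \<le> r \<and> r < yrow_off dy (Suc a)"

definition in_col_block :: "nat \<Rightarrow> (nat \<Rightarrow> nat) \<Rightarrow> nat \<Rightarrow> nat \<Rightarrow> bool" where
  "in_col_block n dx b c \<longleftrightarrow> 1 \<le> b \<and> b \<le> n \<and> xcol_off n dx b \<le> c \<and> c < xcol_off n dx b + dx b"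

lemma in_row_block_less_yrow_off_iff:
  assumes "in_row_block dy a r"
  shows "r < yrow_off dy m \<longleftrightarrow> a < m"
proof
  assume "r < yrow_off dy m"
  then show "a < m" using assms yrow_off_mono[of m a dy] unfolding in_row_block_def by linarith
next
  assume "a < m"
  then show "r < yrow_off dy m" using assms yrow_off_mono[of "Suc a" m dy] unfolding in_row_block_def by simp
qed

lemma in_row_block_iff:
  assumes a: "in_row_block dy a r"
  shows "in_row_block dy a' r \<longleftrightarrow> a' = a"
proof
  assume a': "in_row_block dy a' r"
  have "r < yrow_off dy (Suc a)" "r < yrow_off dy (Suc a')" using a a' unfolding in_row_block_def by simp_all
  then have "a' < Suc a" "a < Suc a'"
    using in_row_block_less_yrow_off_iff[OF a'] in_row_block_less_yrow_off_iff[OF a] by blast+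
  then show "a' = a" by simp
qed (use a in simp)

lemma ex_in_row_block: "r < yrow_off dy m \<Longrightarrow> \<exists>a<m. in_row_block dy a r"
proof (induction m)
  case (Suc m)
  then show ?case unfolding in_row_block_def by (cases "r < yrow_off dy m") (auto intro: less_SucI)
qed (simp add: yrow_off_def)

lemma in_col_block_less_xcol_off_iff:
  assumes "in_col_block n dx b c"
  shows "c < xcol_off n dx k \<longleftrightarrow> k < b"
proof
  assume "c < xcol_off n dx k"
  then show "k < b" using assms xcol_off_antimono[of b k n dx] unfolding in_col_block_def by linarith
next
  assume "k < b"
  then have "xcol_off n dx (b - 1) \<le> xcol_off n dx k" by (intro xcol_off_antimono) simp
  then show "c < xcol_off n dx k"
    using assms xcol_off_pred[of b n dx] unfolding in_col_block_def by simp
qed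

lemma in_col_block_iff:
  assumes b: "in_col_block n dx b c"
  shows "in_col_block n dx b' c \<longleftrightarrow> b' = b"
proof
  assume b': "in_col_block n dx b' c"
  have "c < xcol_off n dx (b - 1)" "c < xcol_off n dx (b' - 1)"
    using b b' xcol_off_pred unfolding in_col_block_def by (metis)+
  then have "b - 1 < b'" "b' - 1 < b"
    using in_col_block_less_xcol_off_iff[OF b'] in_col_block_less_xcol_off_iff[OF b] by blast+
  then show "b' = b" using b b' unfolding in_col_block_def by linarith
qed (use b in simp)

lemma ex_in_col_block:
  assumes "c < d_x n dx"
  shows "\<exists>b. in_col_block n dx b c"
proof -
  \<comment> \<open>The offsets decrease from d_x at 0 to 0 at n: take the first index whose offset is \<le> c.\<close>
  define b where "b = (LEAST k. xcol_off n dx k \<le> c)"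
  have "xcol_off n dx n \<le> c" by (simp add: xcol_off_def)
  then have b_le: "xcol_off n dx b \<le> c" "b \<le> n"
    unfolding b_def by (auto intro: LeastI Least_le)
  have "b \<noteq> 0" using b_le assms d_x_eq_xcol_off by (metis leD)
  then have "\<not> xcol_off n dx (b - 1) \<le> c" unfolding b_def by (intro not_less_Least) simp
  then have "in_col_block n dx b c"
    using b_le \<open>b \<noteq> 0\<close> xcol_off_pred[of b n dx] unfolding in_col_block_def by simp
  then show ?thesis ..
qed

lemma index_M_Q:
  assumes V: "V \<in> rep_Q n dx dy" and r: "r < d_y n dy" "in_row_block dy a r"
    and c: "in_col_block n dx b c"
  shows "M_Q n dx dy V $$ (r, c) =
    (if b = Suc a then fst V b $$ (r - yrow_off dy a, c - xcol_off n dx b) else 0) +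
    (if b = a then snd V b $$ (r - yrow_off dy a, c - xcol_off n dx b) else 0)"
proof -
  have "c < d_x n dx"
    using c xcol_off_pred[of b n dx] xcol_off_le_d_x[of n dx "b - 1"] unfolding in_col_block_def by simp
  have col: "xcol_off n dx i \<le> c \<and> c < xcol_off n dx i + dx i \<longleftrightarrow> i = b" if "i \<in> {1..n}" for i
    using in_col_block_iff[OF c, of i] that unfolding in_col_block_def by auto
  have row: "yrow_off dy a' \<le> r \<and> r < yrow_off dy a' + dy a' \<longleftrightarrow> a' = a" for a'
    using in_row_block_iff[OF r(2), of a'] unfolding in_row_block_def yrow_off_Suc .
  have dims: "dim_row (fst V i) = dy (i - 1)" "dim_col (fst V i) = dx i"
    "dim_row (snd V i) = dy i" "dim_col (snd V i) = dx i" if "i \<in> {1..n}" for i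
    using V that unfolding rep_Q_def by (cases V, fastforce)+
  have placed: "place B (yrow_off dy a') (xcol_off n dx i) r c =
      (if i = b \<and> a' = a then B $$ (r - yrow_off dy a, c - xcol_off n dx b) else 0)"
    if "i \<in> {1..n}" "dim_row B = dy a'" "dim_col B = dx i" for B :: "'a mat" and a' i
    using col[OF that(1)] row[of a'] that(2,3) unfolding place_def by auto
  have summand: "place (fst V i) (yrow_off dy (i - 1)) (xcol_off n dx i) r c
      + place (snd V i) (yrow_off dy i) (xcol_off n dx i) r c =
    (if i = b then (if b = Suc a then fst V b $$ (r - yrow_off dy a, c - xcol_off n dx b) else 0) +
      (if b = a then snd V b $$ (r - yrow_off dy a, c - xcol_off n dx b) else 0) else 0)"
    if i: "i \<in> {1..n}" for i
    using i unfolding placed[OF i dims(1,2)[OF i]] placed[OF i dims(3,4)[OF i]] by (cases "i = b") auto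
  have "M_Q n dx dy V $$ (r, c) = (\<Sum>i\<in>{1..n}. place (fst V i) (yrow_off dy (i - 1)) (xcol_off n dx i) r c
      + place (snd V i) (yrow_off dy i) (xcol_off n dx i) r c)"
    unfolding M_Q_def using r(1) \<open>c < d_x n dx\<close> by (simp del: sum.distrib)
  also have "\<dots> = (\<Sum>i\<in>{1..n}. if i = b then
      (if b = Suc a then fst V b $$ (r - yrow_off dy a, c - xcol_off n dx b) else 0) +
      (if b = a then snd V b $$ (r - yrow_off dy a, c - xcol_off n dx b) else 0) else 0)"
    by (rule sum.cong[OF refl summand])
  finally show ?thesis using c unfolding in_col_block_def by simp
qed

text \<open>The blocks allowed to be nonzero are (y_b, x_b) for \<beta>_b and (y_(b-1), x_b) for \<alpha>_b.\<close>
definition quiver_supported :: "nat \<Rightarrow> (nat \<Rightarrow> nat) \<Rightarrow> (nat \<Rightarrow> nat) \<Rightarrow> 'a::zero mat \<Rightarrow> bool" where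
  "quiver_supported n dx dy S \<longleftrightarrow>
    (\<forall>r c a b. r < d_y n dy \<longrightarrow> in_row_block dy a r \<longrightarrow> in_col_block n dx b c \<longrightarrow>
      b \<noteq> a \<longrightarrow> b \<noteq> Suc a \<longrightarrow> S $$ (r, c) = 0)"

lemma quiver_supported_M_Q: "V \<in> rep_Q n dx dy \<Longrightarrow> quiver_supported n dx dy (M_Q n dx dy V)"
  unfolding quiver_supported_def by (simp add: index_M_Q)

lemma ex_M_Q_eq_if_quiver_supported:
  assumes S: "S \<in> carrier_mat (d_y n dy) (d_x n dx)" and supp: "quiver_supported n dx dy S"
  shows "\<exists>V\<in>rep_Q n dx dy. M_Q n dx dy V = S"
proof -
  define blk where "blk a b = mat (dy a) (dx b) (\<lambda>(r, c). S $$ (yrow_off dy a + r, xcol_off n dx b + c))"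
    for a b
  define V where "V = (\<lambda>b. blk (b - 1) b, \<lambda>b. blk b b)"
  have V: "V \<in> rep_Q n dx dy" unfolding rep_Q_def V_def blk_def by auto
  have "M_Q n dx dy V = S"
  proof (rule eq_matI)
    fix r c assume "r < dim_row S" "c < dim_col S"
    then have rc: "r < d_y n dy" "c < d_x n dx" using S by auto
    obtain a where a: "in_row_block dy a r"
      using ex_in_row_block[of r dy "Suc n"] rc d_y_eq_yrow_off by auto
    obtain b where b: "in_col_block n dx b c" using ex_in_col_block[OF rc(2)] ..
    have "blk a' b $$ (r - yrow_off dy a, c - xcol_off n dx b) = S $$ (r, c)" if "a' = a" for a'
      using a b that unfolding blk_def in_row_block_def in_col_block_def yrow_off_Suc by auto
    then show "M_Q n dx dy V $$ (r, c) = S $$ (r, c)"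
      using index_M_Q[OF V rc(1) a b] supp rc a b unfolding quiver_supported_def V_def by auto
  qed (use S in \<open>auto simp: M_Q_def\<close>)
  with V show ?thesis ..
qed

lemma zeta_block_eq_bordered:
  "S \<in> carrier_mat (d_y n dy) (d_x n dx) \<Longrightarrow> zeta_block n dx dy S = bordered S"
  unfolding zeta_block_def bordered_def by simp

lemma zeta_block_eq_iff:
  assumes S: "S \<in> carrier_mat (d_y n dy) (d_x n dx)" and T: "T \<in> carrier_mat (d_y n dy) (d_x n dx)"
  shows "zeta_block n dx dy S = zeta_block n dx dy T \<longleftrightarrow> S = T"
proof
  assume "zeta_block n dx dy S = zeta_block n dx dy T"
  then have "nw_sub (bordered S) (d_y n dy) (d_x n dx) = nw_sub (bordered T) (d_y n dy) (d_x n dx)"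
    using S T by (simp add: zeta_block_eq_bordered)
  then show "S = T" using S T nw_sub_full[of S] nw_sub_full[of T] by (simp add: nw_sub_bordered)
qed simp

lemma zeta_image_iff_quiver_supported:
  assumes S: "S \<in> carrier_mat (d_y n dy) (d_x n dx)"
  shows "zeta_block n dx dy S \<in> zeta n dx dy ` rep_Q n dx dy \<longleftrightarrow> quiver_supported n dx dy S"
proof -
  have "M_Q n dx dy V \<in> carrier_mat (d_y n dy) (d_x n dx)" for V unfolding M_Q_def by simp
  then have "zeta_block n dx dy S = zeta n dx dy V \<longleftrightarrow> M_Q n dx dy V = S" for V
    using zeta_block_eq_iff[OF S] unfolding zeta_def by metis
  then have "zeta_block n dx dy S \<in> zeta n dx dy ` rep_Q n dx dy \<longleftrightarrow> (\<exists>V\<in>rep_Q n dx dy. M_Q n dx dy V = S)"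
    by (auto simp: image_iff)
  then show ?thesis using quiver_supported_M_Q ex_M_Q_eq_if_quiver_supported[OF S] by metis
qed

lemma Z_yx_zeta_block:
  assumes S: "S \<in> carrier_mat (d_y n dy) (d_x n dx)" and "i \<le> n" "1 \<le> j"
  shows "Z_yx n dx dy (zeta_block n dx dy S) i j = nw_sub S (yrow_off dy (Suc i)) (xcol_off n dx (j - 1))"
proof -
  have "yrow_off dy (Suc i) \<le> d_y n dy"
    using yrow_off_mono[of "Suc i" "Suc n" dy] assms unfolding d_y_eq_yrow_off by simp
  then show ?thesis
    using assms xcol_off_le_d_x[of n dx "j - 1"]
    unfolding Z_yx_def row_end_y_def col_end_x_def zeta_block_eq_bordered[OF S]
    by (simp add: sum_atLeast0AtMost_eq_yrow_off sum_atLeastAtMost_eq_xcol_off nw_sub_bordered[OF S])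
qed

lemma mat_rank_Z_yx_eq_0_iff:
  assumes S: "S \<in> carrier_mat (d_y n dy) (d_x n dx)" and "i \<le> n" "1 \<le> j"
  shows "mat_rank (Z_yx n dx dy (zeta_block n dx dy S) i j) = 0 \<longleftrightarrow>
    (\<forall>r c a b. in_row_block dy a r \<longrightarrow> in_col_block n dx b c \<longrightarrow> a \<le> i \<longrightarrow> j \<le> b \<longrightarrow> S $$ (r, c) = 0)"
proof -
  have "yrow_off dy (Suc i) \<le> d_y n dy"
    using yrow_off_mono[of "Suc i" "Suc n" dy] assms unfolding d_y_eq_yrow_off by simp
  then have "mat_rank (Z_yx n dx dy (zeta_block n dx dy S) i j) = 0 \<longleftrightarrow>
      (\<forall>r c. r < yrow_off dy (Suc i) \<longrightarrow> c < xcol_off n dx (j - 1) \<longrightarrow> S $$ (r, c) = 0)"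
    unfolding Z_yx_zeta_block[OF assms] mat_rank_eq_0_iff using S xcol_off_le_d_x[of n dx "j - 1"]
    by (auto simp: nw_sub_def)
  also have "\<dots> \<longleftrightarrow>
      (\<forall>r c a b. in_row_block dy a r \<longrightarrow> in_col_block n dx b c \<longrightarrow> a \<le> i \<longrightarrow> j \<le> b \<longrightarrow> S $$ (r, c) = 0)"
  proof (intro iffI allI impI)
    fix r c a b
    assume "\<forall>r c. r < yrow_off dy (Suc i) \<longrightarrow> c < xcol_off n dx (j - 1) \<longrightarrow> S $$ (r, c) = 0"
      and "in_row_block dy a r" "in_col_block n dx b c" "a \<le> i" "j \<le> b"
    then show "S $$ (r, c) = 0"
      using in_row_block_less_yrow_off_iff in_col_block_less_xcol_off_iff \<open>1 \<le> j\<close> by simp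
  next
    fix r c
    assume zero: "\<forall>r c a b. in_row_block dy a r \<longrightarrow> in_col_block n dx b c \<longrightarrow> a \<le> i \<longrightarrow> j \<le> b \<longrightarrow> S $$ (r, c) = 0"
      and r: "r < yrow_off dy (Suc i)" and c: "c < xcol_off n dx (j - 1)"
    obtain a where "a < Suc i" "in_row_block dy a r" using ex_in_row_block[OF r] by blast
    moreover obtain b where b: "in_col_block n dx b c"
      using ex_in_col_block c xcol_off_le_d_x less_le_trans by metis
    moreover have "j \<le> b" using in_col_block_less_xcol_off_iff[OF b] c by simp
    ultimately show "S $$ (r, c) = 0" using zero by simp
  qed
  finally show ?thesis .
qed

lemma mat_rank_Z_xy_eq_iff:
  assumes S: "S \<in> carrier_mat (d_y n dy) (d_x n dx)" and "1 \<le> i" "j \<le> n"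
  shows "mat_rank (Z_xy n dx dy (zeta_block n dx dy S) i j) = (\<Sum>k=i..n. dx k) + (\<Sum>k=0..j. dy k) \<longleftrightarrow>
    (\<forall>r c a b. r < d_y n dy \<longrightarrow> in_row_block dy a r \<longrightarrow> in_col_block n dx b c \<longrightarrow>
      j < a \<longrightarrow> b < i \<longrightarrow> S $$ (r, c) = 0)"
proof -
  define p where "p = xcol_off n dx (i - 1)"
  define q where "q = yrow_off dy (Suc j)"
  have pq: "p \<le> d_x n dx" "q \<le> d_y n dy"
    using xcol_off_le_d_x yrow_off_mono[of "Suc j" "Suc n" dy] assms
    unfolding p_def q_def d_y_eq_yrow_off by auto
  have "Z_xy n dx dy (zeta_block n dx dy S) i j = nw_sub (bordered S) (d_y n dy + p) (d_x n dx + q)"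
    unfolding Z_xy_def row_end_x_def col_end_y_def zeta_block_eq_bordered[OF S] p_def q_def
    using assms by (simp add: sum_atLeast0AtMost_eq_yrow_off sum_atLeastAtMost_eq_xcol_off)
  moreover have "(\<Sum>k=i..n. dx k) + (\<Sum>k=0..j. dy k) = p + q"
    unfolding p_def q_def using assms by (simp add: sum_atLeast0AtMost_eq_yrow_off sum_atLeastAtMost_eq_xcol_off)
  ultimately have "mat_rank (Z_xy n dx dy (zeta_block n dx dy S) i j) = (\<Sum>k=i..n. dx k) + (\<Sum>k=0..j. dy k) \<longleftrightarrow>
      (\<forall>r c. q \<le> r \<longrightarrow> r < d_y n dy \<longrightarrow> p \<le> c \<longrightarrow> c < d_x n dx \<longrightarrow> S $$ (r, c) = 0)"
    using mat_rank_nw_sub_bordered_eq_iff[OF S pq] by simp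
  also have "\<dots> \<longleftrightarrow> (\<forall>r c a b. r < d_y n dy \<longrightarrow> in_row_block dy a r \<longrightarrow> in_col_block n dx b c \<longrightarrow>
      j < a \<longrightarrow> b < i \<longrightarrow> S $$ (r, c) = 0)"
  proof (intro iffI allI impI)
    fix r c a b
    assume "\<forall>r c. q \<le> r \<longrightarrow> r < d_y n dy \<longrightarrow> p \<le> c \<longrightarrow> c < d_x n dx \<longrightarrow> S $$ (r, c) = 0"
      and "r < d_y n dy" "in_row_block dy a r" "in_col_block n dx b c" "j < a" "b < i"
    moreover have "q \<le> r" using in_row_block_less_yrow_off_iff[OF \<open>in_row_block dy a r\<close>, of "Suc j"]
      \<open>j < a\<close> unfolding q_def by simp
    moreover have "\<not> i - 1 < b" using \<open>b < i\<close> by simp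
    then have "p \<le> c" using in_col_block_less_xcol_off_iff[OF \<open>in_col_block n dx b c\<close>, of "i - 1"]
      unfolding p_def by simp
    moreover have "c < d_x n dx"
      using in_col_block_less_xcol_off_iff[OF \<open>in_col_block n dx b c\<close>, of 0] xcol_off_le_d_x
        \<open>in_col_block n dx b c\<close> unfolding d_x_eq_xcol_off in_col_block_def by simp
    ultimately show "S $$ (r, c) = 0" by blast
  next
    fix r c
    assume zero: "\<forall>r c a b. r < d_y n dy \<longrightarrow> in_row_block dy a r \<longrightarrow> in_col_block n dx b c \<longrightarrow>
        j < a \<longrightarrow> b < i \<longrightarrow> S $$ (r, c) = 0"
      and rc: "q \<le> r" "r < d_y n dy" "p \<le> c" "c < d_x n dx"
    obtain a where a: "in_row_block dy a r"
      using ex_in_row_block rc(2) unfolding d_y_eq_yrow_off by blast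
    obtain b where b: "in_col_block n dx b c" using ex_in_col_block rc(4) by blast
    have "j < a" using in_row_block_less_yrow_off_iff[OF a, of "Suc j"] rc(1) unfolding q_def by simp
    moreover have "b < i" using in_col_block_less_xcol_off_iff[OF b, of "i - 1"] rc(3) \<open>1 \<le> i\<close>
      unfolding p_def by simp
    ultimately show "S $$ (r, c) = 0" using zero rc(2) a b by simp
  qed
  finally show ?thesis .
qed

text \<open>A block (y_a, x_b) off the two arrow diagonals lies in a northwest corner
  (i, j) = (a, b) if b \<ge> a + 2, and in a southeast corner (i, j) = (b + 1, a - 1) if b < a.\<close>
lemma quiver_supported_iff_corners:
  "quiver_supported n dx dy S \<longleftrightarrow>
    (\<forall>i j. i + 2 \<le> n \<and> i + 2 \<le> j \<and> j \<le> n \<longrightarrow>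
      (\<forall>r c a b. in_row_block dy a r \<longrightarrow> in_col_block n dx b c \<longrightarrow> a \<le> i \<longrightarrow> j \<le> b \<longrightarrow> S $$ (r, c) = 0)) \<and>
    (\<forall>i j. 2 \<le> i \<and> i \<le> n \<and> i - 1 \<le> j \<and> j + 1 \<le> n \<longrightarrow>
      (\<forall>r c a b. r < d_y n dy \<longrightarrow> in_row_block dy a r \<longrightarrow> in_col_block n dx b c \<longrightarrow>
        j < a \<longrightarrow> b < i \<longrightarrow> S $$ (r, c) = 0))"
  (is "?supp \<longleftrightarrow> ?NW \<and> ?SE")
proof (intro iffI conjI)
  assume ?supp
  show ?NW
  proof (intro allI impI)
    fix i j r c a b
    assume "i + 2 \<le> n \<and> i + 2 \<le> j \<and> j \<le> n" "in_row_block dy a r" "in_col_block n dx b c" "a \<le> i" "j \<le> b"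
    moreover from this have "r < d_y n dy"
      using in_row_block_less_yrow_off_iff unfolding d_y_eq_yrow_off by simp
    ultimately show "S $$ (r, c) = 0" using \<open>?supp\<close> unfolding quiver_supported_def by simp
  qed
  show ?SE
  proof (intro allI impI)
    fix i j r c a b
    assume "2 \<le> i \<and> i \<le> n \<and> i - 1 \<le> j \<and> j + 1 \<le> n" "r < d_y n dy" "in_row_block dy a r"
      "in_col_block n dx b c" "j < a" "b < i"
    moreover from this have "b < a" by linarith
    ultimately show "S $$ (r, c) = 0" using \<open>?supp\<close> unfolding quiver_supported_def by simp
  qed
next
  assume corners: "?NW \<and> ?SE"
  show ?supp unfolding quiver_supported_def
  proof (intro allI impI)
    fix r c a b
    assume r: "r < d_y n dy" "in_row_block dy a r" and b: "in_col_block n dx b c" "b \<noteq> a" "b \<noteq> Suc a"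
    have "a \<le> n" using in_row_block_less_yrow_off_iff[OF r(2)] r(1) unfolding d_y_eq_yrow_off by simp
    moreover have "1 \<le> b" "b \<le> n" using b unfolding in_col_block_def by auto
    ultimately consider "a + 2 \<le> b" | "b < a" using b by linarith
    then show "S $$ (r, c) = 0"
    proof cases
      case 1
      then have "a + 2 \<le> n \<and> a + 2 \<le> b \<and> b \<le> n" using \<open>b \<le> n\<close> by linarith
      then show ?thesis using corners r(2) b(1) by (meson le_refl)
    next
      case 2
      then have "2 \<le> Suc b \<and> Suc b \<le> n \<and> Suc b - 1 \<le> a - 1 \<and> a - 1 + 1 \<le> n" "a - 1 < a" "b < Suc b"
        using \<open>a \<le> n\<close> \<open>1 \<le> b\<close> by auto
      then show ?thesis using corners r b(1) by meson
    qed
  qed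
qed

theorem lemmaA2:
  fixes n :: nat and dx dy :: "nat \<Rightarrow> nat" and Z :: "'a::field mat"
  assumes "Z \<in> Y_circ n dx dy"
  shows "Z \<in> zeta n dx dy ` rep_Q n dx dy \<longleftrightarrow>
    ((\<forall>i j. i + 2 \<le> n \<and> i + 2 \<le> j \<and> j \<le> n \<longrightarrow> mat_rank (Z_yx n dx dy Z i j) = 0) \<and>
     (\<forall>i j. 2 \<le> i \<and> i \<le> n \<and> i - 1 \<le> j \<and> j + 1 \<le> n \<longrightarrow>
        mat_rank (Z_xy n dx dy Z i j) = (\<Sum>k=i..n. dx k) + (\<Sum>k=0..j. dy k)))"
proof -
  obtain S where S: "S \<in> carrier_mat (d_y n dy) (d_x n dx)" and Z: "Z = zeta_block n dx dy S"
    using assms unfolding Y_circ_def by auto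
  show ?thesis
    unfolding Z zeta_image_iff_quiver_supported[OF S] quiver_supported_iff_corners
    by (simp add: mat_rank_Z_yx_eq_0_iff[OF S] mat_rank_Z_xy_eq_iff[OF S])
qed

end
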